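(* In the single-deceiver single-oblivious quadratic setting of the context, let $\mathcal{M}\subset[N]$ be a set of players with $r_{i,1}\neq0$ and $\operatorname{sgn}(r_{i,1})=\operatorname{sgn}(r_{1,1})$ for all $i\in\mathcal{M}$, and suppose $\varepsilon_1r_{1,1}q_1q_3<0$. Then the set $\Omega$ of attainable values is nonempty, and there is a nonempty subset $\Omega^*\subset\Omega$ such that for every $J^{\mathrm{ref}}\in\Omega^*$ there exists $\delta^*\in\Delta_1$ with $J_1(x_{\delta^*})=J^{\mathrm{ref}}$, $\varepsilon_1\frac{d}{d\delta}J_1(x_\delta)\big|_{\delta=\delta^*}<0$, and $$J_i(x_{\delta^*})<J_i(x^* )\qquad\forall i\in\mathcal{M}\cup\{1\}.$$
   Context: Quadratic game: $J_i(x)=\frac12x^\top Q_ix+b_i^\top x+p_i$, $Q_i\in\mathbb{R}^{N\times N}$ symmetric, $b_i\in\mathbb{R}^N$, $p_i\in\mathbb{R}$. $(Q)_{j:}$ = $j$-th row, $(Q)_{:j}$ = $j$-th column, $(b)_j$ = $j$-th entry; $[Q]^{d,1}$ is $Q$ with row $d$ and column $1$ removed, $[Q]^{d,\sim}$ is $Q$ with only row $d$ removed. $\mathcal{Q}$ is the matrix with $m$-th row $(Q_m)_{m:}$, $\mathcal{B}$ the vector with $m$-th entry $(b_m)_m$. Player 1 is the only deceiver and deceives only player $d\neq1$. $\bar{\mathcal{Q}}$ is the $N\times N$ matrix whose only nonzero row is row $d$, equal to $(Q_d)_{1:}$; $\bar{\mathcal{B}}$ the vector whose only nonzero entry is entry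 $d$, equal to $(b_d)_1$. For $\delta\in\mathbb{R}$, $\mathcal{Q}_\delta=\mathcal{Q}+\delta\bar{\mathcal{Q}}$, $\mathcal{B}_\delta=\mathcal{B}+\delta\bar{\mathcal{B}}$. Fix $k>0$; assume $-k\mathcal{Q}$ is Hurwitz and $[\mathcal{Q}]^{d,1}$ is invertible. $x^*=-\mathcal{Q}^{-1}\mathcal{B}$ (the Nash equilibrium); $\Delta_1=\{\delta\in\mathbb{R}:-k\mathcal{Q}_\delta\text{ Hurwitz}\}$; for $\delta\in\Delta_1$, $x_\delta=-\mathcal{Q}_\delta^{-1}\mathcal{B}_\delta$ (the deceptive Nash equilibrium). $\Phi=\begin{bmatrix}1\\-([\mathcal{Q}]^{d,1})^{-1}([\mathcal{Q}]^{d,\sim})_{:1}\end{bmatrix}\in\mathbb{R}^N$; $q_1=-\big((b_d)_1+(Q_d)_{1:}x^*\big)$, $q_2=(Q_d)_{1:}\Phi$, $q_3=(Q_d)_{d:}\Phi$; $r_{i,2}=\frac12\Phi^\top Q_i\Phi$, $r_{i,1}=(Q_ix^*+b_i)^\top\Phi$. Given a nonzero constant $\varepsilon_1$, a value $J^{\mathrm{ref}}\in\mathbb{R}$ is attainable if there exists $\delta^*\in\Delta_1$ with $J_1(x_{\delta^*})=J^{\mathrm{ref}}$ and $\varepsilon_1\frac{d}{d\delta}J_1(x_\delta)\big|_{\delta=\delta^*}<0$; $\Omega$ is the set of attainable values. *)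

theory Defs
  imports Complex_Main
    "Jordan_Normal_Form.Gauss_Jordan_Elimination"
    "Jordan_Normal_Form.Determinant"
    "Jordan_Normal_Form.Char_Poly"
begin

text \<open>Players and coordinates are indexed 0,...,N-1; the paper's player 1 is index 0.
  Q i, b i, p i are the data of player i's quadratic cost.\<close>

definition Jcost :: "(nat \<Rightarrow> real mat) \<Rightarrow> (nat \<Rightarrow> real vec) \<Rightarrow> (nat \<Rightarrow> real) \<Rightarrow> nat \<Rightarrow> real vec \<Rightarrow> real" where
  "Jcost Q b p i x = 1/2 * (x \<bullet> (Q i *\<^sub>v x)) + b i \<bullet> x + p i"

definition calQ :: "nat \<Rightarrow> (nat \<Rightarrow> real mat) \<Rightarrow> real mat" where
  "calQ N Q = mat N N (\<lambda>(m, j). Q m $$ (m, j))"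

definition calB :: "nat \<Rightarrow> (nat \<Rightarrow> real vec) \<Rightarrow> real vec" where
  "calB N b = vec N (\<lambda>m. b m $ m)"

definition barQ :: "nat \<Rightarrow> (nat \<Rightarrow> real mat) \<Rightarrow> nat \<Rightarrow> real mat" where
  "barQ N Q d = mat N N (\<lambda>(m, j). if m = d then Q d $$ (0, j) else 0)"

definition barB :: "nat \<Rightarrow> (nat \<Rightarrow> real vec) \<Rightarrow> nat \<Rightarrow> real vec" where
  "barB N b d = vec N (\<lambda>m. if m = d then b d $ 0 else 0)"

definition calQd :: "nat \<Rightarrow> (nat \<Rightarrow> real mat) \<Rightarrow> nat \<Rightarrow> real \<Rightarrow> real mat" where
  "calQd N Q d \<delta> = calQ N Q + \<delta> \<cdot>\<^sub>m barQ N Q d"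

definition calBd :: "nat \<Rightarrow> (nat \<Rightarrow> real vec) \<Rightarrow> nat \<Rightarrow> real \<Rightarrow> real vec" where
  "calBd N b d \<delta> = calB N b + \<delta> \<cdot>\<^sub>v barB N b d"

definition hurwitz :: "real mat \<Rightarrow> bool" where
  "hurwitz A \<longleftrightarrow> dim_row A = dim_col A \<and>
     (\<forall>ev. eigenvalue (map_mat complex_of_real A) ev \<longrightarrow> Re ev < 0)"

definition matinv :: "real mat \<Rightarrow> real mat" where
  "matinv A = the (mat_inverse A)"

definition xstar :: "nat \<Rightarrow> (nat \<Rightarrow> real mat) \<Rightarrow> (nat \<Rightarrow> real vec) \<Rightarrow> real vec" where
  "xstar N Q b = - (matinv (calQ N Q) *\<^sub>v calB N b)"

definition xdelta :: "nat \<Rightarrow> (nat \<Rightarrow> real mat) \<Rightarrow> (nat \<Rightarrow> real vec) \<Rightarrow> nat \<Rightarrow> real \<Rightarrow> real vec" where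
  "xdelta N Q b d \<delta> = - (matinv (calQd N Q d \<delta>) *\<^sub>v calBd N b d \<delta>)"

definition Delta1 :: "nat \<Rightarrow> (nat \<Rightarrow> real mat) \<Rightarrow> nat \<Rightarrow> real \<Rightarrow> real set" where
  "Delta1 N Q d k = {\<delta>. hurwitz ((- k) \<cdot>\<^sub>m calQd N Q d \<delta>)}"

definition mat_delete_row :: "'a mat \<Rightarrow> nat \<Rightarrow> 'a mat" where
  "mat_delete_row A i = mat (dim_row A - 1) (dim_col A)
     (\<lambda>(r, c). A $$ (if r < i then r else Suc r, c))"

definition Phi :: "nat \<Rightarrow> (nat \<Rightarrow> real mat) \<Rightarrow> nat \<Rightarrow> real vec" where
  "Phi N Q d = vec_of_list [1] @\<^sub>v
     (- (matinv (mat_delete (calQ N Q) d 0) *\<^sub>v col (mat_delete_row (calQ N Q) d) 0))"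

definition q1 :: "nat \<Rightarrow> (nat \<Rightarrow> real mat) \<Rightarrow> (nat \<Rightarrow> real vec) \<Rightarrow> nat \<Rightarrow> real" where
  "q1 N Q b d = - (b d $ 0 + row (Q d) 0 \<bullet> xstar N Q b)"

definition q2 :: "nat \<Rightarrow> (nat \<Rightarrow> real mat) \<Rightarrow> nat \<Rightarrow> real" where
  "q2 N Q d = row (Q d) 0 \<bullet> Phi N Q d"

definition q3 :: "nat \<Rightarrow> (nat \<Rightarrow> real mat) \<Rightarrow> nat \<Rightarrow> real" where
  "q3 N Q d = row (Q d) d \<bullet> Phi N Q d"

definition r2 :: "nat \<Rightarrow> (nat \<Rightarrow> real mat) \<Rightarrow> nat \<Rightarrow> nat \<Rightarrow> real" where
  "r2 N Q d i = 1/2 * (Phi N Q d \<bullet> (Q i *\<^sub>v Phi N Q d))"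

definition r1 :: "nat \<Rightarrow> (nat \<Rightarrow> real mat) \<Rightarrow> (nat \<Rightarrow> real vec) \<Rightarrow> nat \<Rightarrow> nat \<Rightarrow> real" where
  "r1 N Q b d i = (Q i *\<^sub>v xstar N Q b + b i) \<bullet> Phi N Q d"

definition attainable :: "nat \<Rightarrow> (nat \<Rightarrow> real mat) \<Rightarrow> (nat \<Rightarrow> real vec) \<Rightarrow> (nat \<Rightarrow> real) \<Rightarrow> nat \<Rightarrow> real \<Rightarrow> real \<Rightarrow> real \<Rightarrow> bool" where
  "attainable N Q b p d k \<epsilon>1 Jref \<longleftrightarrow>
     (\<exists>\<delta>s \<in> Delta1 N Q d k. Jcost Q b p 0 (xdelta N Q b d \<delta>s) = Jref \<and>
        (\<exists>D. ((\<lambda>\<delta>. Jcost Q b p 0 (xdelta N Q b d \<delta>)) has_real_derivative D) (at \<delta>s) \<and> \<epsilon>1 * D < 0))"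

definition Omega :: "nat \<Rightarrow> (nat \<Rightarrow> real mat) \<Rightarrow> (nat \<Rightarrow> real vec) \<Rightarrow> (nat \<Rightarrow> real) \<Rightarrow> nat \<Rightarrow> real \<Rightarrow> real \<Rightarrow> real set" where
  "Omega N Q b p d k \<epsilon>1 = {Jref. attainable N Q b p d k \<epsilon>1 Jref}"

end

theory Submission
  imports Defs "HOL-Analysis.Elementary_Metric_Spaces"
begin

text \<open>Only row d of \<open>calQ\<close> and entry d of \<open>calB\<close> depend on \<open>\<delta>\<close>, so the deceptive equilibrium
  satisfies the equations of \<open>x*\<close> off row d and therefore moves along the line \<open>x* + t \<Phi>\<close>, where
  \<open>\<Phi>\<close> spans the kernel of \<open>calQ\<close> with row d removed; row d then fixes
  \<open>t = \<delta> q1 / (q3 + \<delta> q2)\<close>.  Along this line each cost is the quadratic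
  \<open>J i x* + t r1 i + t\<^sup>2 r2 i\<close>.  For small \<open>\<delta>\<close> of the sign of \<open>\<epsilon>1\<close> the sign condition gives
  \<open>t r1 0 < 0\<close>, hence \<open>t r1 i < 0\<close> on \<open>M\<close>, and the linear term dominates, so all these costs drop;
  likewise \<open>\<epsilon>1 dJ\<^sub>0/d\<delta>\<close> has the sign of \<open>\<epsilon>1 r1 0 q1 q3 < 0\<close>.  Small \<open>\<delta>\<close> stay in \<open>\<Delta>\<^sub>1\<close>
  because the characteristic determinant of \<open>calQd \<delta>\<close> is affine in \<open>\<delta>\<close>.\<close>

definition equilibrium_shift :: "real \<Rightarrow> real \<Rightarrow> real \<Rightarrow> real \<Rightarrow> real" where
  "equilibrium_shift a b c \<delta> = \<delta> * a / (c + \<delta> * b)"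

lemma eventually_equilibrium_shift_cost_decrease:
  fixes \<epsilon> a b c r l q :: real
  assumes same_sign: "sgn l = sgn r" and sign: "\<epsilon> * r * a * c < 0"
  shows "\<forall>\<^sub>F s in at_right 0.
    l * equilibrium_shift a b c (\<epsilon> * s) + q * (equilibrium_shift a b c (\<epsilon> * s))\<^sup>2 < 0"
proof -
  define u where "u s = \<epsilon> * a / (c + \<epsilon> * s * b)" for s
  have c: "c \<noteq> 0" using sign by auto
  have "sgn (\<epsilon> * l * a * c) = sgn (\<epsilon> * r * a * c)"
    by (simp add: sgn_mult same_sign)
  then have "\<epsilon> * l * a * c < 0"
    using sign by (metis sgn_less)
  moreover have "\<epsilon> * a / c * l = \<epsilon> * l * a * c / c\<^sup>2"
    using c by (simp add: power2_eq_square field_simps)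
  ultimately have "\<epsilon> * a / c * l < 0"
    using c by (simp add: divide_neg_pos)
  moreover have "((\<lambda>s. u s * (l + q * s * u s)) \<longlongrightarrow> \<epsilon> * a / c * l) (at_right 0)"
    unfolding u_def using c by (intro tendsto_eq_intros) auto
  ultimately have "\<forall>\<^sub>F s in at_right 0. u s * (l + q * s * u s) < 0"
    by (simp add: order_tendstoD(2))
  moreover have "\<forall>\<^sub>F s in at_right 0. (0::real) < s" by (rule eventually_at_right_less)
  ultimately show ?thesis
  proof eventually_elim
    case (elim s)
    have "equilibrium_shift a b c (\<epsilon> * s) = s * u s"
      unfolding equilibrium_shift_def u_def by simp
    then have "l * equilibrium_shift a b c (\<epsilon> * s) + q * (equilibrium_shift a b c (\<epsilon> * s))\<^sup>2
        = s * (u s * (l + q * s * u s))"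
      by (simp add: power2_eq_square algebra_simps)
    then show ?case using elim by (simp add: mult_pos_neg)
  qed
qed

lemma eventually_equilibrium_shift_derivative_sign:
  fixes \<epsilon> a b c r q :: real
  assumes sign: "\<epsilon> * r * a * c < 0"
  shows "\<forall>\<^sub>F s in at_right 0.
    \<epsilon> * ((r + 2 * q * equilibrium_shift a b c (\<epsilon> * s)) * (a * c / (c + \<epsilon> * s * b)\<^sup>2)) < 0"
proof -
  have c: "c \<noteq> 0" using sign by auto
  let ?D = "\<lambda>s. \<epsilon> * ((r + 2 * q * ((\<epsilon> * s) * a / (c + (\<epsilon> * s) * b))) * (a * c / (c + \<epsilon> * s * b)\<^sup>2))"
  have "isCont ?D 0"
    using c by (intro continuous_intros) auto
  then have "(?D \<longlongrightarrow> ?D 0) (at_right 0)"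
    unfolding isCont_def by (rule filterlim_at_split[THEN iffD1, THEN conjunct2])
  moreover have "?D 0 = \<epsilon> * r * a * c / c\<^sup>2"
    by simp
  ultimately have lim: "(?D \<longlongrightarrow> \<epsilon> * r * a * c / c\<^sup>2) (at_right 0)"
    by (simp only:)
  have "\<epsilon> * r * a * c / c\<^sup>2 < 0"
    using sign c by (intro divide_neg_pos) auto
  then have "\<forall>\<^sub>F s in at_right 0. ?D s < 0"
    by (rule order_tendstoD(2)[OF lim])
  then show ?thesis unfolding equilibrium_shift_def .
qed

lemma equilibrium_shift_has_real_derivative:
  assumes "c + \<delta> * b \<noteq> 0"
  shows "(equilibrium_shift a b c has_real_derivative a * c / (c + \<delta> * b)\<^sup>2) (at \<delta>)"
proof -
  have "((\<lambda>\<delta>. \<delta> * a / (c + \<delta> * b)) has_real_derivative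
      (a * (c + \<delta> * b) - \<delta> * a * b) / ((c + \<delta> * b) * (c + \<delta> * b))) (at \<delta>)"
    using assms by (auto intro!: derivative_eq_intros)
  then show ?thesis
    unfolding equilibrium_shift_def[abs_def] by (simp add: power2_eq_square algebra_simps)
qed

lemma index_mult_mat_vec_sum:
  fixes A :: "'a::comm_semiring_0 mat"
  assumes "A \<in> carrier_mat n m" "v \<in> carrier_vec m" "i < n"
  shows "(A *\<^sub>v v) $ i = (\<Sum>j<m. A $$ (i, j) * v $ j)"
  using assms by (simp add: scalar_prod_def atLeast0LessThan)

lemma mult_mat_vec_uminus:
  fixes A :: "'a::ring mat"
  assumes "A \<in> carrier_mat n m" "v \<in> carrier_vec m"
  shows "A *\<^sub>v (- v) = - (A *\<^sub>v v)"
  using assms by (intro eq_vecI) auto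

lemma smult_mat_mult_mat_vec:
  fixes A :: "'a::comm_semiring_0 mat"
  assumes "A \<in> carrier_mat n m" "v \<in> carrier_vec m"
  shows "(k \<cdot>\<^sub>m A) *\<^sub>v v = k \<cdot>\<^sub>v (A *\<^sub>v v)"
  using assms by (intro eq_vecI) (auto simp: scalar_prod_def sum_distrib_left mult.assoc)

lemma invertible_mat_det_nonzero:
  fixes A :: "'a::comm_ring_1 mat"
  assumes A: "A \<in> carrier_mat n n" and "invertible_mat A"
  shows "det A \<noteq> 0"
proof -
  obtain B where AB: "A * B = 1\<^sub>m n" and BA: "B * A = 1\<^sub>m (dim_row B)"
    using assms unfolding invertible_mat_def inverts_mat_def by auto
  have "dim_col B = n"
    using arg_cong[OF AB, of dim_col] by simp
  moreover have "dim_row B = n"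
    using arg_cong[OF BA, of dim_col] A by simp
  ultimately have B: "B \<in> carrier_mat n n"
    by auto
  have "det A * det B = 1"
    using det_mult[OF A B] AB by simp
  then show ?thesis by auto
qed

lemma matinv_inverse:
  fixes A :: "real mat"
  assumes A: "A \<in> carrier_mat n n" and "det A \<noteq> 0"
  shows "matinv A \<in> carrier_mat n n" "A * matinv A = 1\<^sub>m n" "matinv A * A = 1\<^sub>m n"
proof -
  have "A \<in> Units (ring_mat TYPE(real) n ())"
    by (rule det_non_zero_imp_unit[OF A \<open>det A \<noteq> 0\<close>])
  then obtain B where "mat_inverse A = Some B"
    by (cases "mat_inverse A") (auto dest: mat_inverse(1)[OF A])
  then show "matinv A \<in> carrier_mat n n" "A * matinv A = 1\<^sub>m n" "matinv A * A = 1\<^sub>m n"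
    using mat_inverse(2)[OF A] unfolding matinv_def by auto
qed

lemma matinv_solves:
  fixes A :: "real mat"
  assumes A: "A \<in> carrier_mat n n" and "det A \<noteq> 0" and c: "c \<in> carrier_vec n"
  shows "A *\<^sub>v (- (matinv A *\<^sub>v c)) = - c"
proof -
  note inv = matinv_inverse[OF assms(1,2)]
  have "A *\<^sub>v (matinv A *\<^sub>v c) = (A * matinv A) *\<^sub>v c"
    by (rule assoc_mult_mat_vec[OF A inv(1) c, symmetric])
  also have "\<dots> = c"
    unfolding inv(2) using c by (rule one_mult_mat_vec)
  finally show ?thesis
    using mult_mat_vec_uminus[OF A mult_mat_vec_carrier[OF inv(1) c]] by simp
qed

lemma matinv_solution_unique:
  fixes A :: "real mat"
  assumes A: "A \<in> carrier_mat n n" and "det A \<noteq> 0" and v: "v \<in> carrier_vec n"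
    and Av: "A *\<^sub>v v = - c"
  shows "- (matinv A *\<^sub>v c) = v"
proof -
  note inv = matinv_inverse[OF assms(1,2)]
  have "c = - (A *\<^sub>v v)"
    unfolding Av by simp
  then have c: "c \<in> carrier_vec n"
    using A v by simp
  have "- (matinv A *\<^sub>v c) = matinv A *\<^sub>v (A *\<^sub>v v)"
    unfolding Av by (rule mult_mat_vec_uminus[OF inv(1) c, symmetric])
  also have "\<dots> = (matinv A * A) *\<^sub>v v"
    by (rule assoc_mult_mat_vec[OF inv(1) A v, symmetric])
  also have "\<dots> = v"
    unfolding inv(3) using v by (rule one_mult_mat_vec)
  finally show ?thesis .
qed

lemma mult_mat_vec_kernel_completion:
  fixes A :: "real mat"
  assumes A: "A \<in> carrier_mat n n" and d: "d < n" and det: "det (mat_delete A d 0) \<noteq> 0"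
    and m: "m < n" "m \<noteq> d"
  shows "(A *\<^sub>v (vec_of_list [1] @\<^sub>v
      - (matinv (mat_delete A d 0) *\<^sub>v col (mat_delete_row A d) 0))) $ m = 0"
proof -
  define M where "M = mat_delete A d 0"
  define c where "c = col (mat_delete_row A d) 0"
  define w where "w = - (matinv M *\<^sub>v c)"
  obtain n' where n': "n = Suc n'"
    using d by (cases n) auto
  have M: "M \<in> carrier_mat n' n'"
    unfolding M_def using mat_delete_carrier[of A n n] A n' by simp
  have c: "c \<in> carrier_vec n'"
    unfolding c_def mat_delete_row_def using A n' by (simp add: col_def)
  have w: "w \<in> carrier_vec n'"
    unfolding w_def using matinv_inverse(1)[OF M det[folded M_def]] c by simp
  have Mw: "M *\<^sub>v w = - c"
    unfolding w_def by (rule matinv_solves[OF M det[folded M_def] c])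
  define r where "r = (if m < d then m else m - 1)"
  have r: "r < n'" and r_row: "(if r < d then r else Suc r) = m"
    using m d n' unfolding r_def by auto
  have "(A *\<^sub>v (vec_of_list [1] @\<^sub>v w)) $ m = (\<Sum>j<n. A $$ (m, j) * (vec_of_list [1] @\<^sub>v w) $ j)"
    using A w m n' by (intro index_mult_mat_vec_sum) auto
  also have "\<dots> = A $$ (m, 0) + (\<Sum>s<n'. A $$ (m, Suc s) * w $ s)"
    unfolding n' sum.lessThan_Suc_shift using w by (simp add: vec_of_list_index)
  also have "(\<Sum>s<n'. A $$ (m, Suc s) * w $ s) = (M *\<^sub>v w) $ r"
    using index_mult_mat_vec_sum[OF M w r] r_row r A n'
    by (simp add: M_def mat_delete_def)
  also have "A $$ (m, 0) = c $ r"
    using r_row r A n' by (simp add: c_def mat_delete_row_def col_def)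
  finally have "(A *\<^sub>v (vec_of_list [1] @\<^sub>v w)) $ m = 0"
    using Mw r c by simp
  then show ?thesis
    unfolding w_def M_def c_def .
qed

lemma Jcost_along_line:
  assumes Q: "Q i \<in> carrier_mat n n" "Q i = transpose_mat (Q i)" and b: "b i \<in> carrier_vec n"
    and x: "x \<in> carrier_vec n" and f: "f \<in> carrier_vec n"
  shows "Jcost Q b p i (x + t \<cdot>\<^sub>v f) = Jcost Q b p i x
    + t * ((Q i *\<^sub>v x + b i) \<bullet> f) + t\<^sup>2 * (1/2 * (f \<bullet> (Q i *\<^sub>v f)))"
proof -
  have sym: "x \<bullet> (Q i *\<^sub>v f) = f \<bullet> (Q i *\<^sub>v x)"
    using transpose_vec_mult_scalar[OF Q(1) f x] Q(2) comm_scalar_prod[OF f] Q(1) x by simp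
  have "(x + t \<cdot>\<^sub>v f) \<bullet> (Q i *\<^sub>v (x + t \<cdot>\<^sub>v f))
      = x \<bullet> (Q i *\<^sub>v x) + 2 * t * (f \<bullet> (Q i *\<^sub>v x)) + t\<^sup>2 * (f \<bullet> (Q i *\<^sub>v f))"
    using Q(1) x f sym
    by (simp add: mult_add_distrib_mat_vec mult_mat_vec add_scalar_prod_distrib[of _ n]
        scalar_prod_add_distrib[of _ n] power2_eq_square algebra_simps)
  moreover have "(Q i *\<^sub>v x + b i) \<bullet> f = f \<bullet> (Q i *\<^sub>v x + b i)"
    using Q(1) x f b by (intro comm_scalar_prod[of _ n]) auto
  moreover have "\<dots> = f \<bullet> (Q i *\<^sub>v x) + f \<bullet> b i"
    using Q(1) x f b by (intro scalar_prod_add_distrib[of _ n]) auto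
  moreover have "b i \<bullet> (x + t \<cdot>\<^sub>v f) = b i \<bullet> x + t * (f \<bullet> b i)"
    using x f b by (simp add: scalar_prod_add_distrib[of _ n] comm_scalar_prod[of _ n])
  ultimately show ?thesis
    unfolding Jcost_def by (simp add: algebra_simps)
qed

lemma continuous_on_det:
  fixes M :: "'a::topological_space \<Rightarrow> 'b::real_normed_field mat"
  assumes "\<And>z. M z \<in> carrier_mat n n"
    and "\<And>i j. i < n \<Longrightarrow> j < n \<Longrightarrow> continuous_on S (\<lambda>z. M z $$ (i, j))"
  shows "continuous_on S (\<lambda>z. det (M z))"
proof -
  have "continuous_on S (\<lambda>z. \<Sum>p\<in>{p. p permutes {0..<n}}. signof p * (\<Prod>i=0..<n. M z $$ (i, p i)))"
  proof (intro continuous_intros)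
    fix p i assume "p \<in> {p. p permutes {0..<n}}" "i \<in> {0..<n}"
    then show "continuous_on S (\<lambda>z. M z $$ (i, p i))"
      using assms(2) permutes_in_image by fastforce
  qed
  then show ?thesis
    using det_def'[OF assms(1)] by presburger
qed

lemma index_char_matrix:
  assumes "A \<in> carrier_mat n n" "i < n" "j < n"
  shows "char_matrix A z $$ (i, j) = A $$ (i, j) - (if i = j then z else 0)"
  using assms by (auto simp: char_matrix_def)

lemma continuous_on_char_matrix_entry:
  fixes A :: "'a::real_normed_field mat"
  assumes "A \<in> carrier_mat n n" "i < n" "j < n"
  shows "continuous_on S (\<lambda>z. char_matrix A z $$ (i, j))"
  unfolding index_char_matrix[OF assms] by (cases "i = j") (simp_all add: continuous_on_diff)

lemma continuous_on_det_char_matrix: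
  fixes A :: "'a::real_normed_field mat"
  assumes "A \<in> carrier_mat n n"
  shows "continuous_on S (\<lambda>z. det (char_matrix A z))"
  using assms by (intro continuous_on_det[of _ n] continuous_on_char_matrix_entry) auto

lemma continuous_on_cofactor_char_matrix:
  fixes A :: "'a::real_normed_field mat"
  assumes A: "A \<in> carrier_mat n n"
  shows "continuous_on S (\<lambda>z. cofactor (char_matrix A z) i j)"
  unfolding cofactor_def
proof (intro continuous_intros continuous_on_det[of _ "n - 1"])
  show "mat_delete (char_matrix A z) i j \<in> carrier_mat (n - 1) (n - 1)" for z
    using A mat_delete_carrier[of "char_matrix A z" n n] by simp
  fix i' j' assume ij: "i' < n - 1" "j' < n - 1"
  let ?i = "if i' < i then i' else Suc i'" and ?j = "if j' < j then j' else Suc j'"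
  have "mat_delete (char_matrix A z) i j $$ (i', j') = char_matrix A z $$ (?i, ?j)" for z
    using A ij by (simp add: mat_delete_def char_matrix_def)
  moreover have "continuous_on S (\<lambda>z. char_matrix A z $$ (?i, ?j))"
    using A ij by (intro continuous_on_char_matrix_entry) auto
  ultimately show "continuous_on S (\<lambda>z. mat_delete (char_matrix A z) i j $$ (i', j'))"
    by simp
qed

lemma norm_eigenvalue_le_entry_sum:
  fixes A :: "'a::real_normed_field mat"
  assumes A: "A \<in> carrier_mat n n" and ev: "eigenvalue A l"
  shows "norm l \<le> (\<Sum>i<n. \<Sum>j<n. norm (A $$ (i, j)))"
proof -
  obtain v where v: "v \<in> carrier_vec n" "v \<noteq> 0\<^sub>v n" "A *\<^sub>v v = l \<cdot>\<^sub>v v"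
    using ev A unfolding eigenvalue_def eigenvector_def by auto
  have "n > 0"
  proof (rule ccontr)
    assume "\<not> n > 0"
    then have "v = 0\<^sub>v n" using v(1) by (intro eq_vecI) auto
    then show False using v(2) by simp
  qed
  then have "Max ((\<lambda>j. norm (v $ j)) ` {..<n}) \<in> (\<lambda>j. norm (v $ j)) ` {..<n}"
    by (intro Max_in) auto
  then obtain i where i: "i < n" "norm (v $ i) = Max ((\<lambda>j. norm (v $ j)) ` {..<n})"
    by auto
  then have max: "norm (v $ j) \<le> norm (v $ i)" if "j < n" for j
    using that by simp
  have vi: "v $ i \<noteq> 0"
  proof
    assume "v $ i = 0"
    then have "v = 0\<^sub>v n" using v(1) max by (intro eq_vecI) auto
    then show False using v(2) by simp
  qed
  have "l * v $ i = (\<Sum>j<n. A $$ (i, j) * v $ j)"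
    using v i(1) index_mult_mat_vec_sum[OF A v(1) i(1)] by simp
  then have "norm l * norm (v $ i) \<le> (\<Sum>j<n. norm (A $$ (i, j) * v $ j))"
    by (metis norm_mult norm_sum)
  also have "\<dots> = (\<Sum>j<n. norm (A $$ (i, j)) * norm (v $ j))"
    by (simp add: norm_mult)
  also have "\<dots> \<le> (\<Sum>j<n. norm (A $$ (i, j))) * norm (v $ i)"
    unfolding sum_distrib_right by (intro sum_mono mult_left_mono max) auto
  finally have "norm l \<le> (\<Sum>j<n. norm (A $$ (i, j)))"
    using vi by simp
  also have "\<dots> \<le> (\<Sum>i<n. \<Sum>j<n. norm (A $$ (i, j)))"
    using i by (intro member_le_sum sum_nonneg) auto
  finally show ?thesis .
qed

lemma det_add_smult_single_row:
  fixes A B :: "'a::comm_ring_1 mat"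
  assumes A: "A \<in> carrier_mat n n" and B: "B \<in> carrier_mat n n" and d: "d < n"
    and B_rows: "\<And>i j. i < n \<Longrightarrow> j < n \<Longrightarrow> i \<noteq> d \<Longrightarrow> B $$ (i, j) = 0"
  shows "det (A + c \<cdot>\<^sub>m B) = det A + c * (\<Sum>j<n. B $$ (d, j) * cofactor A d j)"
proof -
  have AB: "A + c \<cdot>\<^sub>m B \<in> carrier_mat n n" using A B by auto
  have "mat_delete (A + c \<cdot>\<^sub>m B) d j = mat_delete A d j" for j
    unfolding mat_delete_def using A B d by (intro eq_matI) (auto simp: B_rows)
  then have cof: "cofactor (A + c \<cdot>\<^sub>m B) d j = cofactor A d j" for j
    unfolding cofactor_def by simp
  have "det (A + c \<cdot>\<^sub>m B) = (\<Sum>j<n. (A $$ (d, j) + c * B $$ (d, j)) * cofactor A d j)"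
    unfolding laplace_expansion_row[OF AB d] using A B d by (intro sum.cong) (auto simp: cof)
  also have "\<dots> = det A + c * (\<Sum>j<n. B $$ (d, j) * cofactor A d j)"
    unfolding laplace_expansion_row[OF A d]
    by (simp add: algebra_simps sum.distrib sum_distrib_left)
  finally show ?thesis .
qed

lemma det_char_matrix_single_row_perturbation:
  fixes A B :: "'a::field mat"
  assumes A: "A \<in> carrier_mat n n" and B: "B \<in> carrier_mat n n" and d: "d < n"
    and B_rows: "\<And>i j. i < n \<Longrightarrow> j < n \<Longrightarrow> i \<noteq> d \<Longrightarrow> B $$ (i, j) = 0"
  shows "det (char_matrix (A + c \<cdot>\<^sub>m B) z)
    = det (char_matrix A z) + c * (\<Sum>j<n. B $$ (d, j) * cofactor (char_matrix A z) d j)"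
proof -
  have "char_matrix (A + c \<cdot>\<^sub>m B) z = char_matrix A z + c \<cdot>\<^sub>m B"
    unfolding char_matrix_def using A B by (intro eq_matI) auto
  then show ?thesis
    using A B d B_rows by (simp add: det_add_smult_single_row[of _ n])
qed

lemma norm_eigenvalue_single_row_perturbation_le:
  fixes A B :: "complex mat"
  assumes A: "A \<in> carrier_mat n n" and B: "B \<in> carrier_mat n n" and "\<bar>\<delta>\<bar> \<le> 1"
    and ev: "eigenvalue (A + complex_of_real \<delta> \<cdot>\<^sub>m B) l"
  shows "norm l \<le> (\<Sum>i<n. \<Sum>j<n. norm (A $$ (i, j)) + norm (B $$ (i, j)))"
proof -
  have "norm l \<le> (\<Sum>i<n. \<Sum>j<n. norm ((A + complex_of_real \<delta> \<cdot>\<^sub>m B) $$ (i, j)))"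
    using A B ev by (intro norm_eigenvalue_le_entry_sum) auto
  also have "\<dots> \<le> (\<Sum>i<n. \<Sum>j<n. norm (A $$ (i, j)) + norm (B $$ (i, j)))"
  proof (intro sum_mono)
    fix i j assume "i \<in> {..<n}" "j \<in> {..<n}"
    then have "norm ((A + complex_of_real \<delta> \<cdot>\<^sub>m B) $$ (i, j))
        \<le> norm (A $$ (i, j)) + \<bar>\<delta>\<bar> * norm (B $$ (i, j))"
      using A B by (simp add: norm_triangle_le norm_mult)
    also have "\<dots> \<le> norm (A $$ (i, j)) + norm (B $$ (i, j))"
      using \<open>\<bar>\<delta>\<bar> \<le> 1\<close> by (simp add: mult_left_le_one_le)
    finally show "norm ((A + complex_of_real \<delta> \<cdot>\<^sub>m B) $$ (i, j))
        \<le> norm (A $$ (i, j)) + norm (B $$ (i, j))" .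
  qed
  finally show ?thesis .
qed

lemma bounded_cofactor_quotient_right_half_disc:
  fixes A :: "complex mat" and w :: "nat \<Rightarrow> complex"
  assumes A: "A \<in> carrier_mat n n" and stable: "\<And>l. eigenvalue A l \<Longrightarrow> Re l < 0"
  obtains C where "C > 0" "\<And>z. 0 \<le> Re z \<Longrightarrow> norm z \<le> R \<Longrightarrow>
    norm ((\<Sum>j<n. w j * cofactor (char_matrix A z) d j) / det (char_matrix A z)) \<le> C"
proof -
  define K where "K = (\<lambda>(x, y). Complex x y) ` ({0..R} \<times> {-R..R})"
  have "compact K"
    unfolding K_def case_prod_unfold
    by (intro compact_continuous_image compact_Times compact_Icc continuous_intros)
  have "det (char_matrix A z) \<noteq> 0" if "0 \<le> Re z" for z
    using that stable eigenvalue_det[OF A] by force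
  then have "continuous_on K (\<lambda>z. (\<Sum>j<n. w j * cofactor (char_matrix A z) d j) / det (char_matrix A z))"
    using A unfolding K_def
    by (intro continuous_intros continuous_on_det_char_matrix continuous_on_cofactor_char_matrix) auto
  then have "bounded ((\<lambda>z. (\<Sum>j<n. w j * cofactor (char_matrix A z) d j) / det (char_matrix A z)) ` K)"
    using \<open>compact K\<close> by (intro compact_imp_bounded compact_continuous_image)
  then obtain a where
    a: "\<And>z. z \<in> K \<Longrightarrow> norm ((\<Sum>j<n. w j * cofactor (char_matrix A z) d j) / det (char_matrix A z)) \<le> a"
    unfolding bounded_iff by blast
  have "z \<in> K" if "0 \<le> Re z" "norm z \<le> R" for z
    unfolding K_def using that abs_Re_le_cmod[of z] abs_Im_le_cmod[of z]
    by (auto intro!: image_eqI[of _ _ "(Re z, Im z)"])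
  then show ?thesis
    using a by (intro that[of "max a 1"]) (auto intro: max.coboundedI1)
qed

text \<open>An eigenvalue \<open>l\<close> of the perturbed matrix with \<open>Re l \<ge> 0\<close> would lie in a fixed compact
  half-disc, where \<open>det (char_matrix A)\<close> has no zeros; expanding the characteristic determinant along
  row \<open>d\<close> then forces \<open>\<bar>\<delta>\<bar> \<ge> 1 / C\<close>.\<close>

lemma eigenvalues_left_half_plane_single_row_perturbation:
  fixes A B :: "complex mat"
  assumes A: "A \<in> carrier_mat n n" and B: "B \<in> carrier_mat n n" and d: "d < n"
    and B_rows: "\<And>i j. i < n \<Longrightarrow> j < n \<Longrightarrow> i \<noteq> d \<Longrightarrow> B $$ (i, j) = 0"
    and stable: "\<And>l. eigenvalue A l \<Longrightarrow> Re l < 0"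
  shows "\<exists>\<eta>>0. \<forall>\<delta>. \<bar>\<delta>\<bar> < \<eta> \<longrightarrow> (\<forall>l. eigenvalue (A + complex_of_real \<delta> \<cdot>\<^sub>m B) l \<longrightarrow> Re l < 0)"
proof -
  define R where "R = (\<Sum>i<n. \<Sum>j<n. norm (A $$ (i, j)) + norm (B $$ (i, j)))"
  define f where "f z = det (char_matrix A z)" for z
  define g where "g z = (\<Sum>j<n. B $$ (d, j) * cofactor (char_matrix A z) d j)" for z
  obtain C where C: "C > 0" "\<And>z. 0 \<le> Re z \<Longrightarrow> norm z \<le> R \<Longrightarrow> norm (g z / f z) \<le> C"
    unfolding f_def g_def
    using bounded_cofactor_quotient_right_half_disc[OF A stable, where w = "\<lambda>j. B $$ (d, j)"] by blast
  show ?thesis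
  proof (intro exI[of _ "min 1 (1 / C)"] conjI allI impI)
    fix \<delta> :: real and l
    assume \<delta>: "\<bar>\<delta>\<bar> < min 1 (1 / C)" and ev: "eigenvalue (A + complex_of_real \<delta> \<cdot>\<^sub>m B) l"
    show "Re l < 0"
    proof (rule ccontr)
      assume "\<not> Re l < 0"
      moreover have "norm l \<le> R"
        unfolding R_def using \<delta> by (intro norm_eigenvalue_single_row_perturbation_le[OF A B _ ev]) auto
      ultimately have bound: "norm (g l / f l) \<le> C" and fl: "f l \<noteq> 0"
        using C(2) stable eigenvalue_det[OF A] unfolding f_def by force+
      have "A + complex_of_real \<delta> \<cdot>\<^sub>m B \<in> carrier_mat n n"
        using A B by simp
      then have "det (char_matrix (A + complex_of_real \<delta> \<cdot>\<^sub>m B) l) = 0"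
        using ev eigenvalue_det by blast
      then have "f l + complex_of_real \<delta> * g l = 0"
        unfolding f_def g_def using det_char_matrix_single_row_perturbation[OF A B d B_rows] by simp
      then have "complex_of_real \<delta> * g l = - f l"
        by (simp add: add_eq_0_iff)
      then have "complex_of_real \<delta> * (g l / f l) = -1"
        using fl by (simp add: field_simps)
      then have "1 = \<bar>\<delta>\<bar> * norm (g l / f l)"
        by (metis norm_minus_cancel norm_mult norm_of_real norm_one)
      also have "\<dots> \<le> \<bar>\<delta>\<bar> * C"
        using bound by (simp add: mult_left_mono)
      also have "\<dots> < 1"
        using \<delta> C(1) by (simp add: field_simps)
      finally show False by simp
    qed
  qed (use C(1) in simp)
qed

lemma hurwitz_single_row_perturbation:
  fixes A B :: "real mat"
  assumes A: "A \<in> carrier_mat n n" and B: "B \<in> carrier_mat n n" and d: "d < n"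
    and B_rows: "\<And>i j. i < n \<Longrightarrow> j < n \<Longrightarrow> i \<noteq> d \<Longrightarrow> B $$ (i, j) = 0"
    and "hurwitz A"
  shows "\<exists>\<eta>>0. \<forall>\<delta>. \<bar>\<delta>\<bar> < \<eta> \<longrightarrow> hurwitz (A + \<delta> \<cdot>\<^sub>m B)"
proof -
  let ?A = "map_mat complex_of_real A" and ?B = "map_mat complex_of_real B"
  have cA: "?A \<in> carrier_mat n n" and cB: "?B \<in> carrier_mat n n"
    using A B by auto
  have B_rows': "?B $$ (i, j) = 0" if "i < n" "j < n" "i \<noteq> d" for i j
    using B B_rows that by simp
  have "Re l < 0" if "eigenvalue ?A l" for l
    using \<open>hurwitz A\<close> that unfolding hurwitz_def by blast
  then obtain \<eta> where "\<eta> > 0" and stable: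
    "\<And>\<delta> l. \<bar>\<delta>\<bar> < \<eta> \<Longrightarrow> eigenvalue (?A + complex_of_real \<delta> \<cdot>\<^sub>m ?B) l \<Longrightarrow> Re l < 0"
    using eigenvalues_left_half_plane_single_row_perturbation[OF cA cB d B_rows'] by blast
  have "map_mat complex_of_real (A + \<delta> \<cdot>\<^sub>m B) = ?A + complex_of_real \<delta> \<cdot>\<^sub>m ?B" for \<delta>
    using A B by (intro eq_matI) auto
  then have "hurwitz (A + \<delta> \<cdot>\<^sub>m B)" if "\<bar>\<delta>\<bar> < \<eta>" for \<delta>
    unfolding hurwitz_def using A B stable[OF that] by simp
  then show ?thesis
    using \<open>\<eta> > 0\<close> by blast
qed

lemma hurwitz_det_nonzero:
  fixes A :: "real mat"
  assumes A: "A \<in> carrier_mat n n" and "hurwitz A"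
  shows "det A \<noteq> 0"
proof
  assume "det A = 0"
  then have "det (map_mat complex_of_real A) = 0"
    by simp
  moreover have "char_matrix (map_mat complex_of_real A) 0 = map_mat complex_of_real A"
    using A unfolding char_matrix_def by (intro eq_matI) auto
  ultimately have "eigenvalue (map_mat complex_of_real A) 0"
    using eigenvalue_det[of "map_mat complex_of_real A" n 0] A by simp
  then show False
    using \<open>hurwitz A\<close> unfolding hurwitz_def by fastforce
qed

locale deception_game =
  fixes N d :: nat and Q :: "nat \<Rightarrow> real mat" and b :: "nat \<Rightarrow> real vec" and k :: real
  assumes Q_carrier: "\<And>i. i < N \<Longrightarrow> Q i \<in> carrier_mat N N"
    and Q_symmetric: "\<And>i. i < N \<Longrightarrow> Q i = transpose_mat (Q i)"
    and b_carrier: "\<And>i. i < N \<Longrightarrow> b i \<in> carrier_vec N"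
    and d: "d < N"
    and hurwitz_calQ: "hurwitz ((- k) \<cdot>\<^sub>m calQ N Q)"
    and invertible_calQ_minor: "invertible_mat (mat_delete (calQ N Q) d 0)"
begin

abbreviation shift :: "real \<Rightarrow> real" where
  "shift \<equiv> equilibrium_shift (q1 N Q b d) (q2 N Q d) (q3 N Q d)"

lemma calQ_carrier: "calQ N Q \<in> carrier_mat N N"
  by (simp add: calQ_def)

lemma det_calQ: "det (calQ N Q) \<noteq> 0"
proof -
  have "det ((- k) \<cdot>\<^sub>m calQ N Q) \<noteq> 0"
    using calQ_carrier hurwitz_calQ by (intro hurwitz_det_nonzero[of _ N]) auto
  then show ?thesis
    by simp
qed

lemma det_calQ_minor: "det (mat_delete (calQ N Q) d 0) \<noteq> 0"
  using calQ_carrier mat_delete_carrier[of _ N N] invertible_calQ_minor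
  by (intro invertible_mat_det_nonzero[of _ "N - 1"]) auto

lemma barQ_carrier: "barQ N Q d \<in> carrier_mat N N"
  by (simp add: barQ_def)

lemma calQd_carrier: "calQd N Q d \<delta> \<in> carrier_mat N N"
  by (simp add: calQd_def calQ_def barQ_def)

lemma xstar_carrier: "xstar N Q b \<in> carrier_vec N"
  unfolding xstar_def using matinv_inverse(1)[OF calQ_carrier det_calQ] by (simp add: calB_def)

lemma calQ_xstar: "calQ N Q *\<^sub>v xstar N Q b = - calB N b"
  unfolding xstar_def by (rule matinv_solves[OF calQ_carrier det_calQ]) (simp add: calB_def)

lemma Phi_carrier: "Phi N Q d \<in> carrier_vec N"
proof -
  have "mat_delete (calQ N Q) d 0 \<in> carrier_mat (N - 1) (N - 1)"
    using mat_delete_carrier[of "calQ N Q" N N] calQ_carrier by simp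
  then have "matinv (mat_delete (calQ N Q) d 0) \<in> carrier_mat (N - 1) (N - 1)"
    using matinv_inverse(1) det_calQ_minor by blast
  then show ?thesis
    unfolding Phi_def carrier_vec_def using d by simp
qed

lemma calQ_Phi: "calQ N Q *\<^sub>v Phi N Q d = q3 N Q d \<cdot>\<^sub>v unit_vec N d"
proof (rule eq_vecI)
  fix m assume "m < dim_vec (q3 N Q d \<cdot>\<^sub>v unit_vec N d)"
  then have m: "m < N" by simp
  show "(calQ N Q *\<^sub>v Phi N Q d) $ m = (q3 N Q d \<cdot>\<^sub>v unit_vec N d) $ m"
  proof (cases "m = d")
    case True
    have "row (calQ N Q) d = row (Q d) d"
      using Q_carrier[OF d] d by (intro eq_vecI) (auto simp: calQ_def)
    then show ?thesis
      using True m calQ_carrier unfolding q3_def by simp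
  next
    case False
    then show ?thesis
      using mult_mat_vec_kernel_completion[OF calQ_carrier d det_calQ_minor m] m
      unfolding Phi_def by (simp add: unit_vec_def)
  qed
qed (simp add: calQ_def)

lemma barQ_mult:
  assumes v: "v \<in> carrier_vec N"
  shows "barQ N Q d *\<^sub>v v = (row (Q d) 0 \<bullet> v) \<cdot>\<^sub>v unit_vec N d"
proof (rule eq_vecI)
  fix m assume "m < dim_vec ((row (Q d) 0 \<bullet> v) \<cdot>\<^sub>v unit_vec N d)"
  then have m: "m < N" by simp
  have row: "row (barQ N Q d) m = (if m = d then row (Q d) 0 else 0\<^sub>v N)"
    using m d Q_carrier[OF d] by (intro eq_vecI) (auto simp: barQ_def)
  have "(barQ N Q d *\<^sub>v v) $ m = row (barQ N Q d) m \<bullet> v"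
    by (rule index_mult_mat_vec) (simp add: barQ_def m)
  also have "\<dots> = (if m = d then row (Q d) 0 \<bullet> v else 0)"
    unfolding row using v by simp
  also have "\<dots> = ((row (Q d) 0 \<bullet> v) \<cdot>\<^sub>v unit_vec N d) $ m"
    using m by (simp add: unit_vec_def)
  finally show "(barQ N Q d *\<^sub>v v) $ m = ((row (Q d) 0 \<bullet> v) \<cdot>\<^sub>v unit_vec N d) $ m" .
qed (simp add: barQ_def)

lemma barB_eq: "barB N b d = (b d $ 0) \<cdot>\<^sub>v unit_vec N d"
  by (intro eq_vecI) (auto simp: barB_def unit_vec_def)

lemma calQd_mult:
  assumes "v \<in> carrier_vec N"
  shows "calQd N Q d \<delta> *\<^sub>v v = calQ N Q *\<^sub>v v + \<delta> \<cdot>\<^sub>v (barQ N Q d *\<^sub>v v)"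
  unfolding calQd_def using assms calQ_carrier barQ_carrier
  by (simp add: add_mult_distrib_mat_vec[of _ N N] smult_mat_mult_mat_vec)

lemma xdelta_eq:
  assumes det: "det (calQd N Q d \<delta>) \<noteq> 0" and den: "q3 N Q d + \<delta> * q2 N Q d \<noteq> 0"
  shows "xdelta N Q b d \<delta> = xstar N Q b + shift \<delta> \<cdot>\<^sub>v Phi N Q d"
proof -
  define t where "t = shift \<delta>"
  define x where "x = xstar N Q b + t \<cdot>\<^sub>v Phi N Q d"
  have x: "x \<in> carrier_vec N"
    unfolding x_def using xstar_carrier Phi_carrier by simp
  have "row (Q d) 0 \<bullet> x = row (Q d) 0 \<bullet> xstar N Q b + t * q2 N Q d"
    unfolding x_def q2_def using row_carrier[of "Q d" 0] Q_carrier[OF d] xstar_carrier Phi_carrier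
    by (simp add: scalar_prod_add_distrib[of _ N])
  moreover have "t * (q3 N Q d + \<delta> * q2 N Q d) = \<delta> * q1 N Q b d"
    using den unfolding t_def equilibrium_shift_def by simp
  ultimately have key: "t * q3 N Q d + \<delta> * (row (Q d) 0 \<bullet> x) = - (\<delta> * b d $ 0)"
    unfolding q1_def by (simp add: algebra_simps)
  have "calQ N Q *\<^sub>v x = - calB N b + (t * q3 N Q d) \<cdot>\<^sub>v unit_vec N d"
    unfolding x_def using calQ_carrier xstar_carrier Phi_carrier
    by (simp add: mult_add_distrib_mat_vec[of _ N N] mult_mat_vec calQ_xstar calQ_Phi smult_smult_assoc)
  then have "calQd N Q d \<delta> *\<^sub>v x = - calBd N b d \<delta>"
    using key x unfolding calQd_mult[OF x] barQ_mult[OF x] calBd_def barB_eq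
    by (intro eq_vecI) (auto simp: calB_def unit_vec_def algebra_simps)
  then show ?thesis
    unfolding xdelta_def x_def t_def by (rule matinv_solution_unique[OF calQd_carrier det x[unfolded x_def t_def]])
qed

lemma Jcost_xdelta:
  assumes "i < N" and "det (calQd N Q d \<delta>) \<noteq> 0" and "q3 N Q d + \<delta> * q2 N Q d \<noteq> 0"
  shows "Jcost Q b p i (xdelta N Q b d \<delta>)
    = Jcost Q b p i (xstar N Q b) + shift \<delta> * r1 N Q b d i + (shift \<delta>)\<^sup>2 * r2 N Q d i"
  unfolding xdelta_eq[OF assms(2,3)] r1_def r2_def using assms(1)
  by (intro Jcost_along_line[of _ _ N] Q_carrier Q_symmetric b_carrier xstar_carrier Phi_carrier)

lemma Jcost_xdelta_has_real_derivative:
  assumes U: "open U" "\<delta>\<^sub>0 \<in> U"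
    and regular: "\<And>\<delta>. \<delta> \<in> U \<Longrightarrow> det (calQd N Q d \<delta>) \<noteq> 0 \<and> q3 N Q d + \<delta> * q2 N Q d \<noteq> 0"
  shows "((\<lambda>\<delta>. Jcost Q b p 0 (xdelta N Q b d \<delta>)) has_real_derivative
    (r1 N Q b d 0 + 2 * r2 N Q d 0 * shift \<delta>\<^sub>0) * (q1 N Q b d * q3 N Q d / (q3 N Q d + \<delta>\<^sub>0 * q2 N Q d)\<^sup>2))
    (at \<delta>\<^sub>0)"
proof (rule has_field_derivative_transform_within_open[OF _ U])
  show "((\<lambda>\<delta>. Jcost Q b p 0 (xstar N Q b) + shift \<delta> * r1 N Q b d 0 + (shift \<delta>)\<^sup>2 * r2 N Q d 0)
      has_real_derivative (r1 N Q b d 0 + 2 * r2 N Q d 0 * shift \<delta>\<^sub>0)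
        * (q1 N Q b d * q3 N Q d / (q3 N Q d + \<delta>\<^sub>0 * q2 N Q d)\<^sup>2)) (at \<delta>\<^sub>0)"
    using equilibrium_shift_has_real_derivative regular[OF U(2)]
    by (auto intro!: derivative_eq_intros simp: algebra_simps)
  show "Jcost Q b p 0 (xstar N Q b) + shift \<delta> * r1 N Q b d 0 + (shift \<delta>)\<^sup>2 * r2 N Q d 0
      = Jcost Q b p 0 (xdelta N Q b d \<delta>)" if "\<delta> \<in> U" for \<delta>
    using Jcost_xdelta[of 0] regular[OF that] d by simp
qed

lemma Delta1_neighbourhood:
  "\<exists>\<eta>>0. \<forall>\<delta>. \<bar>\<delta>\<bar> < \<eta> \<longrightarrow> \<delta> \<in> Delta1 N Q d k \<and> det (calQd N Q d \<delta>) \<noteq> 0"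
proof -
  have A: "(- k) \<cdot>\<^sub>m calQ N Q \<in> carrier_mat N N" and B: "(- k) \<cdot>\<^sub>m barQ N Q d \<in> carrier_mat N N"
    using calQ_carrier barQ_carrier by auto
  have "((- k) \<cdot>\<^sub>m barQ N Q d) $$ (i, j) = 0" if "i < N" "j < N" "i \<noteq> d" for i j
    using that by (simp add: barQ_def)
  then obtain \<eta> where "\<eta> > 0"
    and stable: "\<And>\<delta>. \<bar>\<delta>\<bar> < \<eta> \<Longrightarrow> hurwitz ((- k) \<cdot>\<^sub>m calQ N Q + \<delta> \<cdot>\<^sub>m ((- k) \<cdot>\<^sub>m barQ N Q d))"
    using hurwitz_single_row_perturbation[OF A B d _ hurwitz_calQ] by blast
  have scaled: "(- k) \<cdot>\<^sub>m calQd N Q d \<delta> = (- k) \<cdot>\<^sub>m calQ N Q + \<delta> \<cdot>\<^sub>m ((- k) \<cdot>\<^sub>m barQ N Q d)" for \<delta>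
    using calQ_carrier barQ_carrier by (intro eq_matI) (auto simp: calQd_def algebra_simps)
  have "\<delta> \<in> Delta1 N Q d k \<and> det (calQd N Q d \<delta>) \<noteq> 0" if "\<bar>\<delta>\<bar> < \<eta>" for \<delta>
  proof
    have hur: "hurwitz ((- k) \<cdot>\<^sub>m calQd N Q d \<delta>)"
      unfolding scaled by (rule stable[OF that])
    then show "\<delta> \<in> Delta1 N Q d k"
      unfolding Delta1_def by simp
    have "det ((- k) \<cdot>\<^sub>m calQd N Q d \<delta>) \<noteq> 0"
      using calQd_carrier hur by (intro hurwitz_det_nonzero[of _ N]) auto
    then show "det (calQd N Q d \<delta>) \<noteq> 0"
      by simp
  qed
  then show ?thesis
    using \<open>\<eta> > 0\<close> by blast
qed

lemma regular_neighbourhood: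
  assumes "q3 N Q d \<noteq> 0"
  obtains U where "open U" "0 \<in> U"
    "\<And>\<delta>. \<delta> \<in> U \<Longrightarrow> \<delta> \<in> Delta1 N Q d k \<and> det (calQd N Q d \<delta>) \<noteq> 0 \<and> q3 N Q d + \<delta> * q2 N Q d \<noteq> 0"
proof -
  obtain \<eta> where "\<eta> > 0" and near: "\<And>\<delta>. \<bar>\<delta>\<bar> < \<eta> \<Longrightarrow> \<delta> \<in> Delta1 N Q d k \<and> det (calQd N Q d \<delta>) \<noteq> 0"
    using Delta1_neighbourhood by blast
  show ?thesis
  proof
    show "open {\<delta>. \<bar>\<delta>\<bar> < \<eta> \<and> q3 N Q d + \<delta> * q2 N Q d \<noteq> 0}"
      by (intro open_Collect_conj open_Collect_less open_Collect_neq continuous_intros)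
    show "0 \<in> {\<delta>. \<bar>\<delta>\<bar> < \<eta> \<and> q3 N Q d + \<delta> * q2 N Q d \<noteq> 0}"
      using \<open>\<eta> > 0\<close> assms by simp
  qed (use near in blast)
qed

lemma exists_deceptive_delta:
  fixes \<epsilon> :: real and I :: "nat set"
  assumes I: "finite I" "I \<subseteq> {..<N}" and same_sign: "\<forall>i\<in>I. sgn (r1 N Q b d i) = sgn (r1 N Q b d 0)"
    and sign: "\<epsilon> * r1 N Q b d 0 * q1 N Q b d * q3 N Q d < 0"
  shows "\<exists>\<delta>s \<in> Delta1 N Q d k.
    (\<exists>D. ((\<lambda>\<delta>. Jcost Q b p 0 (xdelta N Q b d \<delta>)) has_real_derivative D) (at \<delta>s) \<and> \<epsilon> * D < 0) \<and>
    (\<forall>i\<in>I. Jcost Q b p i (xdelta N Q b d \<delta>s) < Jcost Q b p i (xstar N Q b))"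
proof -
  have "q3 N Q d \<noteq> 0"
    using sign by auto
  then obtain U where "open U" "0 \<in> U" and regular:
    "\<And>\<delta>. \<delta> \<in> U \<Longrightarrow> \<delta> \<in> Delta1 N Q d k \<and> det (calQd N Q d \<delta>) \<noteq> 0 \<and> q3 N Q d + \<delta> * q2 N Q d \<noteq> 0"
    using regular_neighbourhood by blast
  have "((*) \<epsilon> \<longlongrightarrow> 0) (at_right 0)"
    by (intro tendsto_eq_intros) auto
  then have "\<forall>\<^sub>F s in at_right 0. \<epsilon> * s \<in> U"
    using topological_tendstoD \<open>open U\<close> \<open>0 \<in> U\<close> by blast
  moreover have "\<forall>\<^sub>F s in at_right 0.
      \<forall>i\<in>I. r1 N Q b d i * shift (\<epsilon> * s) + r2 N Q d i * (shift (\<epsilon> * s))\<^sup>2 < 0"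
    using I same_sign by (intro eventually_ball_finite ballI eventually_equilibrium_shift_cost_decrease[OF _ sign]) auto
  moreover have "\<forall>\<^sub>F s in at_right 0. \<epsilon> * ((r1 N Q b d 0 + 2 * r2 N Q d 0 * shift (\<epsilon> * s))
      * (q1 N Q b d * q3 N Q d / (q3 N Q d + \<epsilon> * s * q2 N Q d)\<^sup>2)) < 0"
    by (rule eventually_equilibrium_shift_derivative_sign[OF sign])
  ultimately have "\<forall>\<^sub>F s in at_right 0. \<epsilon> * s \<in> U \<and>
      (\<forall>i\<in>I. r1 N Q b d i * shift (\<epsilon> * s) + r2 N Q d i * (shift (\<epsilon> * s))\<^sup>2 < 0) \<and>
      \<epsilon> * ((r1 N Q b d 0 + 2 * r2 N Q d 0 * shift (\<epsilon> * s))
        * (q1 N Q b d * q3 N Q d / (q3 N Q d + \<epsilon> * s * q2 N Q d)\<^sup>2)) < 0"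
    by (intro eventually_conj)
  from eventually_happens'[OF trivial_limit_at_right_real this]
  obtain s where s: "\<epsilon> * s \<in> U"
    and decrease: "\<forall>i\<in>I. r1 N Q b d i * shift (\<epsilon> * s) + r2 N Q d i * (shift (\<epsilon> * s))\<^sup>2 < 0"
    and derivative: "\<epsilon> * ((r1 N Q b d 0 + 2 * r2 N Q d 0 * shift (\<epsilon> * s))
        * (q1 N Q b d * q3 N Q d / (q3 N Q d + \<epsilon> * s * q2 N Q d)\<^sup>2)) < 0"
    by blast
  show ?thesis
  proof (intro bexI[of _ "\<epsilon> * s"] conjI ballI)
    show "\<epsilon> * s \<in> Delta1 N Q d k"
      using regular[OF s] by blast
    show "\<exists>D. ((\<lambda>\<delta>. Jcost Q b p 0 (xdelta N Q b d \<delta>)) has_real_derivative D) (at (\<epsilon> * s)) \<and> \<epsilon> * D < 0"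
      using Jcost_xdelta_has_real_derivative[OF \<open>open U\<close> s] regular derivative by blast
    show "Jcost Q b p i (xdelta N Q b d (\<epsilon> * s)) < Jcost Q b p i (xstar N Q b)" if "i \<in> I" for i
      using Jcost_xdelta[of i] regular[OF s] decrease that I by (auto simp: algebra_simps)
  qed
qed

end

theorem theorem3:
  fixes N d :: nat and Q :: "nat \<Rightarrow> real mat" and b :: "nat \<Rightarrow> real vec"
    and p :: "nat \<Rightarrow> real" and k \<epsilon>1 :: real and M :: "nat set"
  assumes Qcar: "\<forall>i<N. Q i \<in> carrier_mat N N \<and> Q i = transpose_mat (Q i)"
    and bcar: "\<forall>i<N. b i \<in> carrier_vec N"
    and d: "d < N" "d \<noteq> 0"
    and k: "k > 0"
    and hur: "hurwitz ((- k) \<cdot>\<^sub>m calQ N Q)"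
    and inv: "invertible_mat (mat_delete (calQ N Q) d 0)"
    and eps: "\<epsilon>1 \<noteq> 0"
    and M: "M \<subseteq> {..<N}"
    and Msgn: "\<forall>i\<in>M. r1 N Q b d i \<noteq> 0 \<and> sgn (r1 N Q b d i) = sgn (r1 N Q b d 0)"
    and sign: "\<epsilon>1 * r1 N Q b d 0 * q1 N Q b d * q3 N Q d < 0"
  shows "Omega N Q b p d k \<epsilon>1 \<noteq> {} \<and>
    (\<exists>\<Omega>s \<subseteq> Omega N Q b p d k \<epsilon>1. \<Omega>s \<noteq> {} \<and>
      (\<forall>Jref \<in> \<Omega>s. \<exists>\<delta>s \<in> Delta1 N Q d k.
         Jcost Q b p 0 (xdelta N Q b d \<delta>s) = Jref \<and>
         (\<exists>D. ((\<lambda>\<delta>. Jcost Q b p 0 (xdelta N Q b d \<delta>)) has_real_derivative D) (at \<delta>s) \<and> \<epsilon>1 * D < 0) \<and>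
         (\<forall>i \<in> M \<union> {0}. Jcost Q b p i (xdelta N Q b d \<delta>s) < Jcost Q b p i (xstar N Q b))))"
proof -
  interpret deception_game N d Q b k
    using Qcar bcar d hur inv by unfold_locales auto
  have "\<exists>\<delta>s \<in> Delta1 N Q d k.
      (\<exists>D. ((\<lambda>\<delta>. Jcost Q b p 0 (xdelta N Q b d \<delta>)) has_real_derivative D) (at \<delta>s) \<and> \<epsilon>1 * D < 0) \<and>
      (\<forall>i \<in> M \<union> {0}. Jcost Q b p i (xdelta N Q b d \<delta>s) < Jcost Q b p i (xstar N Q b))"
    (is "\<exists>\<delta>s \<in> _. ?deceptive \<delta>s")
    using exists_deceptive_delta[of "M \<union> {0}" \<epsilon>1 p] finite_subset[OF M] M d Msgn sign by auto
  then obtain \<delta>s where "\<delta>s \<in> Delta1 N Q d k" "?deceptive \<delta>s"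
    by blast
  moreover from this have "Jcost Q b p 0 (xdelta N Q b d \<delta>s) \<in> Omega N Q b p d k \<epsilon>1"
    unfolding Omega_def attainable_def by blast
  ultimately show ?thesis
    by (intro conjI exI[of _ "{Jcost Q b p 0 (xdelta N Q b d \<delta>s)}"]) auto
qed

end
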